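(* Let $\mathsf{F}(X)=X+(X\times X)$ and $\mathsf{B}=\mathcal{P}$ be the interaction and observation functors, and let $(X,f)$ be an $(\mathsf{F},\mathsf{B})$-dialgebra. An equivalence relation $\mathcal{R}\subseteq X\times X$ is the kernel $\{(x,y)\mid h(x)=h(y)\}$ of some homomorphism $h:(X,f)\to(Y,g)$ (for some $(\mathsf{F},\mathsf{B})$-dialgebra $(Y,g)$) if and only if for all $(x_1,x_2)\in\mathcal{R}$, $(y_1,y_2)\in\mathcal{R}$ and $z_1\in X$: (i) if $x_1\to z_1$ then there is $z_2$ with $x_2\to z_2$ and $(z_1,z_2)\in\mathcal{R}$; and (ii) if $(x_1,y_1)\to z_1$ then there is $z_2$ with $(x_2,y_2)\to z_2$ and $(z_1,z_2)\in\mathcal{R}$. As a corollary, the kernel of the canonical map of the bisimilarity quotient of $(X,f)$ (i.e. dialgebraic bisimilarity $\sim_f$) is the largest equivalence relation satisfying (i) and (ii).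
   Context: For functors $\mathsf{F},\mathsf{B}:\mathbf{Set}\to\mathbf{Set}$, an $(\mathsf{F},\mathsf{B})$-dialgebra is a pair $(X,f)$ with $X$ a set and $f:\mathsf{F}X\to\mathsf{B}X$ a function; a homomorphism $h:(X,f)\to(Y,g)$ is a function $h:X\to Y$ with $g\circ\mathsf{F}h=\mathsf{B}h\circ f$. The interaction functor is $\mathsf{F}(X)=X+(X\times X)$ with $\mathsf{F}h(x)=h(x)$ and $\mathsf{F}h(x,y)=(h(x),h(y))$; the observation functor is $\mathsf{B}(X)=\mathcal{P}(X)$ with $\mathsf{B}h(S)=h[S]$. Elements of $X$ and of $X\times X$ are regarded as elements of $\mathsf{F}X$ without coproduct tags. Notation: $x\to z$ means $z\in f(x)$, and $(x,y)\to z$ means $z\in f(x,y)$. Dialgebraic bisimilarity: $x\sim_f y$ iff some homomorphism out of $(X,f)$ identifies $x$ and $y$. The bisimilarity quotient of $(X,f)$ is the wide pushout in $\mathit{Dialg}(\mathsf{F},\mathsf{B})$ of all quotients (epimorphisms modulo isomorphism) of $(X,f)$, with canonical map the induced morphism out of $(X,f)$. *)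

theory Defs
  imports Main
begin

definition Fset :: "'a set \<Rightarrow> ('a + 'a \<times> 'a) set" where
  "Fset X = Inl ` X \<union> Inr ` (X \<times> X)"

definition Fmap :: "('a \<Rightarrow> 'b) \<Rightarrow> ('a + 'a \<times> 'a) \<Rightarrow> ('b + 'b \<times> 'b)" where
  "Fmap h = map_sum h (map_prod h h)"

definition dialg :: "'a set \<Rightarrow> (('a + 'a \<times> 'a) \<Rightarrow> 'a set) \<Rightarrow> bool" where
  "dialg X f \<longleftrightarrow> (\<forall>u\<in>Fset X. f u \<subseteq> X)"

definition dhom :: "'a set \<Rightarrow> (('a + 'a \<times> 'a) \<Rightarrow> 'a set) \<Rightarrow> 'b set \<Rightarrow> (('b + 'b \<times> 'b) \<Rightarrow> 'b set)
                   \<Rightarrow> ('a \<Rightarrow> 'b) \<Rightarrow> bool" where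
  "dhom X f Y g h \<longleftrightarrow> (\<forall>x\<in>X. h x \<in> Y) \<and> (\<forall>u\<in>Fset X. g (Fmap h u) = h ` (f u))"

definition kernel :: "'a set \<Rightarrow> ('a \<Rightarrow> 'b) \<Rightarrow> 'a rel" where
  "kernel X h = {(x, y). x \<in> X \<and> y \<in> X \<and> h x = h y}"

definition bisim_conds :: "'a set \<Rightarrow> (('a + 'a \<times> 'a) \<Rightarrow> 'a set) \<Rightarrow> 'a rel \<Rightarrow> bool" where
  "bisim_conds X f R \<longleftrightarrow>
    (\<forall>x1 x2 y1 y2 z1. (x1, x2) \<in> R \<longrightarrow> (y1, y2) \<in> R \<longrightarrow> z1 \<in> X \<longrightarrow>
       (z1 \<in> f (Inl x1) \<longrightarrow> (\<exists>z2. z2 \<in> f (Inl x2) \<and> (z1, z2) \<in> R)) \<and>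
       (z1 \<in> f (Inr (x1, y1)) \<longrightarrow> (\<exists>z2. z2 \<in> f (Inr (x2, y2)) \<and> (z1, z2) \<in> R)))"

text \<open>Codomains are taken with carrier of type 'a set set (every homomorphic image of X
  fits in such a type, so this loses no generality).\<close>
definition dbisim :: "'a set \<Rightarrow> (('a + 'a \<times> 'a) \<Rightarrow> 'a set) \<Rightarrow> 'a rel" where
  "dbisim X f = {(x, y). x \<in> X \<and> y \<in> X \<and>
     (\<exists>(Y :: 'a set set) g h. dialg Y g \<and> dhom X f Y g h \<and> h x = h y)}"

end

theory Submission
  imports Defs
begin

(* The conditions (i),(ii) say that the relation lifted to F X by the relator
   Frel R transfers the transitions f into R: whenever (u, v) \<in> Frel R, every
   z \<in> f u has a partner z' \<in> f v with (z, z') \<in> R.  In this form: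
   - a kernel of a homomorphism h transfers, since F h identifies Frel-related
     arguments and g \<circ> F h = P h \<circ> f;
   - conversely an equivalence R that transfers is the kernel of the quotient
     map X \<rightarrow> X//R, where the quotient structure is defined on representatives
     and is well defined exactly because R transfers.
   Hence the equivalences satisfying (i),(ii) are precisely the kernels, and
   bisimilarity, being the union of all kernels, contains each of them.  To see
   that bisimilarity is itself such a kernel we show that its transitive closure
   still transfers: one-position steps Fstep (changing a single argument along a
   kernel) transfer, transfer is closed under unions and transitive closure, and
   Frel of R\<^sup>+ is contained in the transitive closure of the one-position steps.
   By maximality the transitive closure adds nothing. *)

definition Frel :: "'a rel \<Rightarrow> ('a + 'a \<times> 'a) rel" where
  "Frel R = {(Inl a, Inl b) | a b. (a, b) \<in> R}
          \<union> {(Inr (a, a'), Inr (b, b')) | a a' b b'. (a, b) \<in> R \<and> (a', b') \<in> R}"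

definition transfers :: "(('a + 'a \<times> 'a) \<Rightarrow> 'a set) \<Rightarrow> ('a + 'a \<times> 'a) rel \<Rightarrow> 'a rel \<Rightarrow> bool" where
  "transfers f P R \<longleftrightarrow> (\<forall>(u, v) \<in> P. \<forall>z \<in> f u. \<exists>z' \<in> f v. (z, z') \<in> R)"

lemma Fset_Frel:
  assumes "R \<subseteq> X \<times> X" and "(u, v) \<in> Frel R"
  shows "u \<in> Fset X" "v \<in> Fset X"
  using assms by (auto simp: Frel_def Fset_def)

lemma bisim_conds_iff_transfers:
  assumes "dialg X f" and "R \<subseteq> X \<times> X"
  shows "bisim_conds X f R \<longleftrightarrow> transfers f (Frel R) R"
proof
  assume conds: "bisim_conds X f R"
  show "transfers f (Frel R) R"
    unfolding transfers_def
  proof (intro ballI, clarify)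
    fix u v z assume uv: "(u, v) \<in> Frel R" and z: "z \<in> f u"
    have "z \<in> X" using assms Fset_Frel[OF assms(2) uv] z by (auto simp: dialg_def)
    with uv z conds show "\<exists>z'\<in>f v. (z, z') \<in> R"
      unfolding Frel_def bisim_conds_def by blast
  qed
next
  assume "transfers f (Frel R) R"
  moreover have "(Inl x1, Inl x2) \<in> Frel R" "(Inr (x1, y1), Inr (x2, y2)) \<in> Frel R"
    if "(x1, x2) \<in> R" "(y1, y2) \<in> R" for x1 x2 y1 y2
    using that by (auto simp: Frel_def)
  ultimately show "bisim_conds X f R"
    unfolding transfers_def bisim_conds_def by fast
qed

lemma Fmap_Frel_kernel:
  assumes "(u, v) \<in> Frel (kernel X h)"
  shows "Fmap h u = Fmap h v"
  using assms by (auto simp: Frel_def kernel_def Fmap_def)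

lemma kernel_transfers:
  assumes "dialg X f" and "dhom X f Y g h"
  shows "transfers f (Frel (kernel X h)) (kernel X h)"
  unfolding transfers_def
proof (intro ballI, clarify)
  fix u v z
  assume uv: "(u, v) \<in> Frel (kernel X h)" and z: "z \<in> f u"
  have K: "kernel X h \<subseteq> X \<times> X" by (auto simp: kernel_def)
  note uvX = Fset_Frel[OF K uv]
  have "h z \<in> h ` f u" using z by blast
  also have "h ` f u = g (Fmap h u)" using assms(2) uvX by (simp add: dhom_def)
  also have "\<dots> = h ` f v" using assms(2) uvX by (simp add: dhom_def Fmap_Frel_kernel[OF uv])
  finally obtain z' where "z' \<in> f v" "h z = h z'" by auto
  moreover have "z \<in> X" "z' \<in> X" using assms(1) uvX z \<open>z' \<in> f v\<close> by (auto simp: dialg_def)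
  ultimately show "\<exists>z'\<in>f v. (z, z') \<in> kernel X h" by (auto simp: kernel_def)
qed

lemma Frel_sym:
  assumes "sym R" and "(u, v) \<in> Frel R"
  shows "(v, u) \<in> Frel R"
  using assms by (auto simp: Frel_def sym_def)

lemma Fmap_comp: "Fmap h (Fmap k u) = Fmap (h \<circ> k) u"
  by (cases u) (auto simp: Fmap_def)

(* For a transferring equivalence, related arguments have successor sets with
   the same equivalence classes (one inclusion; symmetry gives the other). *)
lemma transfers_class_image:
  assumes "equiv X R" and "transfers f (Frel R) R" and "(u, v) \<in> Frel R"
  shows "(\<lambda>x. R``{x}) ` f u \<subseteq> (\<lambda>x. R``{x}) ` f v"
proof clarify
  fix z assume "z \<in> f u"
  then obtain z' where "z' \<in> f v" "(z, z') \<in> R"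
    using assms(2,3) unfolding transfers_def by blast
  then show "R``{z} \<in> (\<lambda>x. R``{x}) ` f v"
    using assms(1) by (auto simp: equiv_class_eq_iff)
qed

definition quotient_dialg ::
    "(('a + 'a \<times> 'a) \<Rightarrow> 'a set) \<Rightarrow> 'a rel \<Rightarrow> ('a set + 'a set \<times> 'a set) \<Rightarrow> 'a set set" where
  "quotient_dialg f R = (\<lambda>w. (\<lambda>x. R``{x}) ` f (Fmap (\<lambda>C. SOME x. x \<in> C) w))"

lemma Fmap_representatives:
  assumes "equiv X R" and "w \<in> Fset (X//R)"
  shows "Fmap (\<lambda>C. SOME x. x \<in> C) w \<in> Fset X"
proof -
  have "(SOME x. x \<in> C) \<in> X" if "C \<in> X//R" for C
    using in_quotient_imp_non_empty[OF assms(1) that] in_quotient_imp_subset[OF assms(1) that]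
    by (metis some_in_eq subsetD)
  then show ?thesis using assms(2) by (auto simp: Fset_def Fmap_def)
qed

lemma dialg_quotient:
  assumes "dialg X f" and "equiv X R"
  shows "dialg (X//R) (quotient_dialg f R)"
  unfolding dialg_def
proof
  fix w assume "w \<in> Fset (X//R)"
  then have "f (Fmap (\<lambda>C. SOME x. x \<in> C) w) \<subseteq> X"
    using assms(1) Fmap_representatives[OF assms(2)] by (simp add: dialg_def)
  then show "quotient_dialg f R w \<subseteq> X//R"
    unfolding quotient_dialg_def by (auto intro: quotientI)
qed

lemma Frel_representatives:
  assumes "equiv X R" and "u \<in> Fset X"
  shows "(u, Fmap ((\<lambda>C. SOME x. x \<in> C) \<circ> (\<lambda>x. R``{x})) u) \<in> Frel R"
proof -
  have "(x, SOME y. y \<in> R``{x}) \<in> R" if "x \<in> X" for x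
    using equiv_class_self[OF assms(1) that] by (metis Image_singleton_iff someI)
  then show ?thesis using assms(2) by (auto simp: Fset_def Fmap_def Frel_def)
qed

lemma dhom_quotient:
  assumes "equiv X R" and "transfers f (Frel R) R"
  shows "dhom X f (X//R) (quotient_dialg f R) (\<lambda>x. R``{x})"
  unfolding dhom_def
proof (intro conjI ballI)
  fix x assume "x \<in> X" then show "R``{x} \<in> X//R" by (rule quotientI)
next
  fix u assume "u \<in> Fset X"
  note rel = Frel_representatives[OF assms(1) this]
  have sym: "sym R" using assms(1) by (simp add: equiv_def)
  show "quotient_dialg f R (Fmap (\<lambda>x. R``{x}) u) = (\<lambda>x. R``{x}) ` f u"
    unfolding quotient_dialg_def Fmap_comp
    by (rule equalityI[OF transfers_class_image[OF assms Frel_sym[OF sym rel]]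
                           transfers_class_image[OF assms rel]])
qed

lemma kernel_quotient:
  assumes "equiv X R"
  shows "kernel X (\<lambda>x. R``{x}) = R"
proof -
  have "(x, y) \<in> kernel X (\<lambda>x. R``{x}) \<longleftrightarrow> (x, y) \<in> R" for x y
    using equiv_class_eq_iff[OF assms] by (simp add: kernel_def) blast
  then show ?thesis by auto
qed

lemma kernel_bisim_conds:
  assumes "dialg X f" and "dhom X f Y g h"
  shows "bisim_conds X f (kernel X h)"
proof -
  have "kernel X h \<subseteq> X \<times> X" by (auto simp: kernel_def)
  then show ?thesis
    using bisim_conds_iff_transfers[OF assms(1)] kernel_transfers[OF assms] by blast
qed

(* Sufficiency: an equivalence satisfying (i),(ii) is the kernel of the quotient map. *)
lemma bisim_conds_kernel:
  fixes R :: "'a rel"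
  assumes "dialg X f" and "equiv X R" and "bisim_conds X f R"
  shows "\<exists>(Y :: 'a set set) g h. dialg Y g \<and> dhom X f Y g h \<and> R = kernel X h"
proof -
  have "transfers f (Frel R) R"
    using assms bisim_conds_iff_transfers equiv_type by blast
  then show ?thesis
    using dialg_quotient[OF assms(1,2)] dhom_quotient[OF assms(2)] kernel_quotient[OF assms(2)]
    by metis
qed

definition Fstep :: "'a set \<Rightarrow> 'a rel \<Rightarrow> ('a + 'a \<times> 'a) rel" where
  "Fstep X R = {(Inl a, Inl b) | a b. (a, b) \<in> R}
             \<union> {(Inr (a, y), Inr (b, y)) | a b y. (a, b) \<in> R \<and> y \<in> X}
             \<union> {(Inr (y, a), Inr (y, b)) | a b y. (a, b) \<in> R \<and> y \<in> X}"

lemma Fstep_subset_Frel: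
  assumes "Id_on X \<subseteq> R"
  shows "Fstep X R \<subseteq> Frel R"
  using assms by (auto simp: Fstep_def Frel_def)

lemma Fstep_Union: "Fstep X (\<Union>\<K>) = (\<Union>K\<in>\<K>. Fstep X K)"
  by (auto simp: Fstep_def)

lemma trancl_context:
  assumes "\<And>x y. (x, y) \<in> R \<Longrightarrow> (c x, c y) \<in> S" and "(a, b) \<in> R\<^sup>+"
  shows "(c a, c b) \<in> S\<^sup>+"
  using assms(2) by induction (auto intro: assms(1) trancl_into_trancl)

(* Lifting paths: change the first argument along its path, then the second. *)
lemma Frel_trancl:
  assumes "R \<subseteq> X \<times> X"
  shows "Frel (R\<^sup>+) \<subseteq> (Fstep X R)\<^sup>+"
proof clarify
  fix u v assume "(u, v) \<in> Frel (R\<^sup>+)"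
  then consider a b where "u = Inl a" "v = Inl b" "(a, b) \<in> R\<^sup>+"
    | a a' b b' where "u = Inr (a, a')" "v = Inr (b, b')" "(a, b) \<in> R\<^sup>+" "(a', b') \<in> R\<^sup>+"
    by (auto simp: Frel_def)
  then show "(u, v) \<in> (Fstep X R)\<^sup>+"
  proof cases
    case 1
    have "(Inl a, Inl b) \<in> (Fstep X R)\<^sup>+"
      by (rule trancl_context[OF _ 1(3)]) (auto simp: Fstep_def)
    then show ?thesis using 1 by simp
  next
    case 2
    have "a' \<in> X" "b \<in> X" using 2 trancl_subset_Sigma[OF assms] by auto
    have "(Inr (a, a'), Inr (b, a')) \<in> (Fstep X R)\<^sup>+"
      by (rule trancl_context[OF _ 2(3)]) (use \<open>a' \<in> X\<close> in \<open>auto simp: Fstep_def\<close>)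
    also have "(Inr (b, a'), Inr (b, b')) \<in> (Fstep X R)\<^sup>+"
      by (rule trancl_context[OF _ 2(4)]) (use \<open>b \<in> X\<close> in \<open>auto simp: Fstep_def\<close>)
    finally show ?thesis using 2 by simp
  qed
qed

lemma transfers_mono:
  assumes "transfers f P R" and "Q \<subseteq> P" and "R \<subseteq> S"
  shows "transfers f Q S"
  using assms unfolding transfers_def by blast

lemma transfers_UN:
  assumes "\<forall>K \<in> \<K>. transfers f (P K) R"
  shows "transfers f (\<Union>K \<in> \<K>. P K) R"
  using assms unfolding transfers_def by blast

lemma transfers_trancl:
  assumes "trans R" and "transfers f P R"
  shows "transfers f (P\<^sup>+) R"
  unfolding transfers_def
proof clarify
  fix u v z assume "(u, v) \<in> P\<^sup>+" "z \<in> f u"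
  then show "\<exists>z'\<in>f v. (z, z') \<in> R"
  proof (induction arbitrary: z rule: trancl_induct)
    case (base v)
    then show ?case using assms(2) unfolding transfers_def by blast
  next
    case (step v w)
    then obtain z' where "z' \<in> f v" "(z, z') \<in> R" by blast
    then show ?case
      using step.hyps(2) assms unfolding transfers_def trans_def by blast
  qed
qed

lemma dbisim_Union:
  fixes X :: "'a set"
  shows "dbisim X f = \<Union>{kernel X h | h. \<exists>(Y :: 'a set set) g. dialg Y g \<and> dhom X f Y g h}"
  by (auto simp: dbisim_def kernel_def)

lemma dbisim_greatest:
  assumes "dialg X f" and "equiv X S" and "bisim_conds X f S"
  shows "S \<subseteq> dbisim X f"
  using bisim_conds_kernel[OF assms] unfolding dbisim_Union by blast

lemma Id_on_dbisim:
  assumes "dialg X f"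
  shows "Id_on X \<subseteq> dbisim X f"
proof (rule dbisim_greatest[OF assms])
  show "equiv X (Id_on X)" by (auto simp: equiv_def refl_on_def sym_def trans_def)
  show "bisim_conds X f (Id_on X)"
    using assms by (auto simp: bisim_conds_def dialg_def Fset_def)
qed

(* One-position steps along bisimilarity transfer, each via a single kernel. *)
lemma dbisim_transfers_Fstep:
  fixes X :: "'a set"
  assumes "dialg X f"
  shows "transfers f (Fstep X (dbisim X f)) (dbisim X f)"
proof -
  have "transfers f (Fstep X (kernel X h)) (dbisim X f)"
    if "dialg (Y :: 'a set set) g" "dhom X f Y g h" for Y g h
  proof (rule transfers_mono[OF kernel_transfers[OF assms that(2)]])
    show "Fstep X (kernel X h) \<subseteq> Frel (kernel X h)"
      by (rule Fstep_subset_Frel) (auto simp: kernel_def)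
    show "kernel X h \<subseteq> dbisim X f" using that unfolding dbisim_Union by blast
  qed
  then have "\<forall>K \<in> {kernel X h | h. \<exists>(Y :: 'a set set) g. dialg Y g \<and> dhom X f Y g h}.
      transfers f (Fstep X K) (dbisim X f)"
    by blast
  then show ?thesis
    unfolding dbisim_Union[of X f] Fstep_Union by (rule transfers_UN)
qed

lemma equiv_trancl:
  assumes "R \<subseteq> X \<times> X" and "Id_on X \<subseteq> R" and "sym R"
  shows "equiv X (R\<^sup>+)"
proof (rule equivI)
  show "R\<^sup>+ \<subseteq> X \<times> X" by (rule trancl_subset_Sigma[OF assms(1)])
  show "refl_on X (R\<^sup>+)"
    by (rule refl_onI) (use assms(2) in blast)
  show "sym (R\<^sup>+)" by (rule sym_trancl[OF assms(3)])
  show "trans (R\<^sup>+)" by (rule trans_trancl)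
qed

lemma dbisim_subset: "dbisim X f \<subseteq> X \<times> X"
  by (auto simp: dbisim_def)

lemma sym_dbisim: "sym (dbisim X f)"
  by (auto simp: dbisim_def sym_def)

lemma dbisim_trancl_transfers:
  assumes "dialg X f"
  shows "transfers f (Frel ((dbisim X f)\<^sup>+)) ((dbisim X f)\<^sup>+)"
proof -
  have "dbisim X f \<subseteq> (dbisim X f)\<^sup>+" by auto
  then have "transfers f (Fstep X (dbisim X f)) ((dbisim X f)\<^sup>+)"
    by (rule transfers_mono[OF dbisim_transfers_Fstep[OF assms] order_refl])
  then have "transfers f ((Fstep X (dbisim X f))\<^sup>+) ((dbisim X f)\<^sup>+)"
    by (rule transfers_trancl[OF trans_trancl])
  then show ?thesis
    by (rule transfers_mono[OF _ Frel_trancl[OF dbisim_subset] order_refl])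
qed

lemma dbisim_trancl:
  assumes "dialg X f"
  shows "(dbisim X f)\<^sup>+ = dbisim X f"
proof
  have "equiv X ((dbisim X f)\<^sup>+)"
    by (rule equiv_trancl[OF dbisim_subset Id_on_dbisim[OF assms] sym_dbisim])
  moreover have "bisim_conds X f ((dbisim X f)\<^sup>+)"
    using bisim_conds_iff_transfers[OF assms trancl_subset_Sigma[OF dbisim_subset]]
      dbisim_trancl_transfers[OF assms] by simp
  ultimately show "(dbisim X f)\<^sup>+ \<subseteq> dbisim X f"
    by (rule dbisim_greatest[OF assms])
qed auto

theorem theorem1:
  fixes X :: "'a set" and f :: "('a + 'a \<times> 'a) \<Rightarrow> 'a set" and R :: "'a rel"
  assumes "dialg X f"
  shows "(equiv X R \<longrightarrow>
            ((\<exists>(Y :: 'a set set) g h. dialg Y g \<and> dhom X f Y g h \<and> R = kernel X h)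
               \<longleftrightarrow> bisim_conds X f R))
       \<and> (\<forall>(Y :: 'b set) g h. dialg Y g \<and> dhom X f Y g h \<longrightarrow> bisim_conds X f (kernel X h))
       \<and> (equiv X (dbisim X f) \<and> bisim_conds X f (dbisim X f)
          \<and> (\<forall>S. equiv X S \<and> bisim_conds X f S \<longrightarrow> S \<subseteq> dbisim X f))"
proof (intro conjI impI allI)
  assume "equiv X R"
  show "(\<exists>(Y :: 'a set set) g h. dialg Y g \<and> dhom X f Y g h \<and> R = kernel X h)
          \<longleftrightarrow> bisim_conds X f R"
    using kernel_bisim_conds[OF assms] bisim_conds_kernel[OF assms \<open>equiv X R\<close>] by blast
next
  fix Y :: "'b set" and g h
  assume "dialg Y g \<and> dhom X f Y g h"
  then show "bisim_conds X f (kernel X h)"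
    using kernel_bisim_conds[OF assms] by blast
next
  show "equiv X (dbisim X f)"
    using equiv_trancl[OF dbisim_subset Id_on_dbisim[OF assms] sym_dbisim]
    by (simp add: dbisim_trancl[OF assms])
  show "bisim_conds X f (dbisim X f)"
    using dbisim_trancl_transfers[OF assms]
    by (simp add: dbisim_trancl[OF assms] bisim_conds_iff_transfers[OF assms dbisim_subset])
next
  fix S assume "equiv X S \<and> bisim_conds X f S"
  then show "S \<subseteq> dbisim X f"
    using dbisim_greatest[OF assms] by blast
qed

end
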